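(* Let $k$ be a field of characteristic zero, $n\ge1$, $S=k[x_1,\ldots,x_n]$, and $(S,L)$ a Lie–Rinehart algebra with $L$ a free $S$-module with basis $\alpha_1,\ldots,\alpha_n$, with enveloping algebra $U$. Let $p\geq0$. (i) If $u\in F_pU$ and $\{f^I:I\in\mathbb{N}^n,|I|=p\}\subset S$ satisfy $u\equiv\sum_{|I|=p}f^I\alpha^I \pmod{F_{p-1}U}$, then $$d^0(u)\equiv\sum_{|J|=p-1}d^0\Big(\Omega^0\big((j_n+1)f^{J+e_n},(j_{n-1}+1)f^{J+e_{n-1}},\ldots,(j_1+1)f^{J+e_1}\big)\Big)\alpha^J \pmod{F_{p-2}\mathcal{X}^1},$$ where $J=(j_n,\ldots,j_1)$. (ii) If $\omega\in F_p\mathcal{X}^1$ and $\{f^I_l: I\in\mathbb{N}^n,|I|=p,l\in\{1,\ldots,n\}\}\subset S$ satisfy $\omega\equiv\sum_{l=1}^n\sum_{|I|=p}f^I_l\alpha^I\hat{x}_l\pmod{F_{p-1}\mathcal{X}^1}$, then, writing $f^I=(f^I_1,\ldots,f^I_n)$, $$d^1(\omega)\equiv\sum_{|J|=p-1}d^1\Big(\Omega^1\big((j_n+1)f^{J+e_n},\ldots,(j_1+1)f^{J+e_1}\big)\Big)\alpha^J\pmod{F_{p-2}\mathcal{X}^2}.$$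
   Context: Write $\alpha_i(s)$ for the action of $\alpha_i$ on $s\in S$. For $I=(i_n,\ldots,i_1)\in\mathbb{N}^n$ put $\alpha^I=\alpha_n^{i_n}\cdots\alpha_1^{i_1}\in U$ and $|I|=i_n+\cdots+i_1$; the $\alpha^I$ form a basis of $U$ as a left $S$-module. $F_pU$ is the $S$-span of the $\alpha^I$ with $|I|\le p$ ($F_pU=0$ for $p<0$). For $m\in\{1,\ldots,n\}$, $e_m\in\mathbb{N}^n$ is the tuple with $1$ in the entry indexed by $m$ and $0$ elsewhere (so $\alpha^{I+e_m}$ raises the exponent of $\alpha_m$ by one). Let $W=\operatorname{span}_k(x_1,\ldots,x_n)$, $\hat x_1,\ldots,\hat x_n$ the dual basis, and $\mathcal{X}^q=U\otimes_k\operatorname{Hom}_k(\Lambda^qW,k)$, whose elements are written $\sum_K u_K\,\hat x_{k_1}\wedge\cdots\wedge\hat x_{k_q}$ with $u_K\in U$ (this is the complex computing the Hochschild cohomology $H^\bullet(S,U)$ obtained from the Koszul resolution of $S$). The differentials satisfy $d^0(u)=\sum_{k=1}^n[u,x_k]\hat x_k$ and $d^1(\sum_k u_k\hat x_k)=\sum_{1\le k<l\le n}([u_k,x_l]-[u_l,x_k])\hat x_k\wedge\hat x_l$. $F_p\mathcal{X}^q$ is the $k$-span of the elements $f\alpha^I\hat x_{k_1}\wedge\cdots\wedge\hat x_{k_q}$ with $f\in S$, $|I|\le p$. For $g^1,\ldots,g^n\in S$, $\Omega^0(g^n,\ldots,g^1)=\sum_{i=1}^n g^i\alpha_i\in U$;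 for $f^1,\ldots,f^n\in S^n$ with $f^i=(f^i_1,\ldots,f^i_n)$, $\Omega^1(f^n,\ldots,f^1)=\sum_{k=1}^n\sum_{i=1}^nf^i_k\alpha_i\hat x_k\in\mathcal{X}^1$. For an element $\sum_K c_K\hat x_K$ with all $c_K\in S$, the product $(\sum_Kc_K\hat x_K)\alpha^J$ means $\sum_K c_K\alpha^J\hat x_K$. *)

theory Defs
  imports Main
begin

fun oprod :: "(nat \<Rightarrow> 'a::monoid_mult) \<Rightarrow> nat \<Rightarrow> 'a" where
  "oprod g 0 = 1"
| "oprod g (Suc m) = g (Suc m) * oprod g m"

text \<open>Multi-indices I = (i_n,...,i_1), represented as functions nat => nat supported on {1..n}.\<close>
definition idx :: "nat \<Rightarrow> (nat \<Rightarrow> nat) set" where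
  "idx n = {I. \<forall>i. (i = 0 \<or> n < i) \<longrightarrow> I i = 0}"

definition absI :: "nat \<Rightarrow> (nat \<Rightarrow> nat) \<Rightarrow> nat" where
  "absI n I = (\<Sum>i=1..n. I i)"

definition mpow :: "(nat \<Rightarrow> 'a::monoid_mult) \<Rightarrow> nat \<Rightarrow> (nat \<Rightarrow> nat) \<Rightarrow> 'a" where
  "mpow a n I = oprod (\<lambda>i. a i ^ I i) n"

definition incI :: "(nat \<Rightarrow> nat) \<Rightarrow> nat \<Rightarrow> (nat \<Rightarrow> nat)" where
  "incI J m = J(m := Suc (J m))"

definition idx_deg :: "nat \<Rightarrow> int \<Rightarrow> (nat \<Rightarrow> nat) set" where
  "idx_deg n p = {I \<in> idx n. int (absI n I) = p}"

definition Fil :: "'u::ring_1 set \<Rightarrow> (nat \<Rightarrow> 'u) \<Rightarrow> nat \<Rightarrow> int \<Rightarrow> 'u set" where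
  "Fil S \<alpha> n p = {u. \<exists>f. (\<forall>I. f I \<in> S) \<and>
       u = (\<Sum>I\<in>{I \<in> idx n. int (absI n I) \<le> p}. f I * mpow \<alpha> n I)}"

text \<open>Elements of X^1 are represented by their coefficient functions k |-> u_k (k in {1..n}),
  elements of X^2 by (k,l) |-> u_{kl} (1 <= k < l <= n).\<close>
definition FX1 :: "'u::ring_1 set \<Rightarrow> (nat \<Rightarrow> 'u) \<Rightarrow> nat \<Rightarrow> int \<Rightarrow> (nat \<Rightarrow> 'u) set" where
  "FX1 S \<alpha> n p = {\<omega>. \<forall>k\<in>{1..n}. \<omega> k \<in> Fil S \<alpha> n p}"

definition FX2 :: "'u::ring_1 set \<Rightarrow> (nat \<Rightarrow> 'u) \<Rightarrow> nat \<Rightarrow> int \<Rightarrow> (nat \<Rightarrow> nat \<Rightarrow> 'u) set" where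
  "FX2 S \<alpha> n p = {\<omega>. \<forall>k l. 1 \<le> k \<and> k < l \<and> l \<le> n \<longrightarrow> \<omega> k l \<in> Fil S \<alpha> n p}"

definition comm :: "'u::ring_1 \<Rightarrow> 'u \<Rightarrow> 'u" where
  "comm a b = a * b - b * a"

definition d0 :: "(nat \<Rightarrow> 'u::ring_1) \<Rightarrow> 'u \<Rightarrow> (nat \<Rightarrow> 'u)" where
  "d0 x u = (\<lambda>k. comm u (x k))"

definition d1 :: "(nat \<Rightarrow> 'u::ring_1) \<Rightarrow> (nat \<Rightarrow> 'u) \<Rightarrow> (nat \<Rightarrow> nat \<Rightarrow> 'u)" where
  "d1 x \<omega> = (\<lambda>k l. comm (\<omega> k) (x l) - comm (\<omega> l) (x k))"

text \<open>Omega^0(g^n,...,g^1) = sum_i g^i alpha_i ; Omega^1(f^n,...,f^1) = sum_k sum_i f^i_k alpha_i xhat_k,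
  where f i k stands for f^i_k.\<close>
definition Omega0 :: "(nat \<Rightarrow> 'u::ring_1) \<Rightarrow> nat \<Rightarrow> (nat \<Rightarrow> 'u) \<Rightarrow> 'u" where
  "Omega0 \<alpha> n g = (\<Sum>i=1..n. g i * \<alpha> i)"

definition Omega1 :: "(nat \<Rightarrow> 'u::ring_1) \<Rightarrow> nat \<Rightarrow> (nat \<Rightarrow> nat \<Rightarrow> 'u) \<Rightarrow> (nat \<Rightarrow> 'u)" where
  "Omega1 \<alpha> n f = (\<lambda>k. \<Sum>i=1..n. f i k * \<alpha> i)"

text \<open>The setting: U (the whole type 'u) is an associative k-algebra, k = K a central subfield of
  characteristic zero; S = K[x_1,...,x_n] a polynomial subring; alpha_1..alpha_n span L = free
  S-module, with the Lie-Rinehart relations [alpha_i,s] = alpha_i(s) in S and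
  [alpha_i,alpha_j] in L; and the PBW monomials alpha^I form a basis of U as left S-module.
  (Up to isomorphism, these data are exactly the enveloping algebra of such a Lie-Rinehart
  algebra (S,L).)\<close>
definition LR_env :: "'u::ring_1 set \<Rightarrow> 'u set \<Rightarrow> (nat \<Rightarrow> 'u) \<Rightarrow> (nat \<Rightarrow> 'u) \<Rightarrow> nat \<Rightarrow> bool" where
  "LR_env K S x \<alpha> n \<longleftrightarrow>
     \<comment> \<open>K is a field of characteristic zero, central in U\<close>
     0 \<in> K \<and> 1 \<in> K \<and>
     (\<forall>a\<in>K. \<forall>b\<in>K. a + b \<in> K \<and> a * b \<in> K \<and> - a \<in> K) \<and>
     (\<forall>a\<in>K. a \<noteq> 0 \<longrightarrow> (\<exists>b\<in>K. a * b = 1)) \<and>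
     (\<forall>m::nat. 0 < m \<longrightarrow> (of_nat m :: 'u) \<noteq> 0) \<and>
     (\<forall>c\<in>K. \<forall>u. c * u = u * c) \<and>
     \<comment> \<open>S = K[x_1,...,x_n], a commutative polynomial ring\<close>
     (\<forall>i\<in>{1..n}. x i \<in> S) \<and>
     (\<forall>a\<in>S. \<forall>b\<in>S. a * b = b * a) \<and>
     S = {\<Sum>a\<in>A. c a * mpow x n a | A c. finite A \<and> A \<subseteq> idx n \<and> (\<forall>a\<in>A. c a \<in> K)} \<and>
     (\<forall>A c. finite A \<and> A \<subseteq> idx n \<and> (\<forall>a\<in>A. c a \<in> K) \<and> (\<Sum>a\<in>A. c a * mpow x n a) = 0
        \<longrightarrow> (\<forall>a\<in>A. c a = 0)) \<and>
     \<comment> \<open>Lie-Rinehart relations: anchor and bracket\<close>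
     (\<forall>i\<in>{1..n}. \<forall>s\<in>S. comm (\<alpha> i) s \<in> S) \<and>
     (\<forall>i\<in>{1..n}. \<forall>j\<in>{1..n}. \<exists>c. (\<forall>l. c l \<in> S) \<and> comm (\<alpha> i) (\<alpha> j) = (\<Sum>l=1..n. c l * \<alpha> l)) \<and>
     \<comment> \<open>the alpha^I form a basis of U as a left S-module\<close>
     (\<forall>u. \<exists>A f. finite A \<and> A \<subseteq> idx n \<and> (\<forall>I\<in>A. f I \<in> S) \<and> u = (\<Sum>I\<in>A. f I * mpow \<alpha> n I)) \<and>
     (\<forall>A f. finite A \<and> A \<subseteq> idx n \<and> (\<forall>I\<in>A. f I \<in> S) \<and> (\<Sum>I\<in>A. f I * mpow \<alpha> n I) = 0
        \<longrightarrow> (\<forall>I\<in>A. f I = 0))"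

end

(* Modulo lower filtration, U behaves like the polynomial ring over S in the alpha_i: reordering
   costs brackets [alpha_i, alpha_j] in L, so alpha_i alpha^J = alpha^(J+e_i) mod F_|J|.
   Consequently commutation with s in S acts on leading terms as the derivation induced by the
   anchor: [alpha^I, s] = sum_m i_m alpha_m(s) alpha^(I-e_m) mod F_(|I|-2), by induction on |I|,
   peeling off the top factor of alpha^I. Applying this with s = x_k to the leading part of u and
   reindexing I = J + e_m gives (i); (ii) follows by applying (i) to each coefficient of omega,
   since d^1 is built componentwise from commutators with the x_k. *)
theory Submission
  imports Defs "HOL.Modules"
begin

lemma oprod_cong: "(\<And>i. i \<in> {1..m} \<Longrightarrow> g i = h i) \<Longrightarrow> oprod g m = oprod h m"
  by (induction m) auto

lemma oprod_commute:
  "(\<And>i. i \<in> {1..m} \<Longrightarrow> g i * z = z * g i) \<Longrightarrow> oprod g m * z = z * oprod g m"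
proof (induction m)
  case (Suc m)
  have "oprod g (Suc m) * z = g (Suc m) * (z * oprod g m)"
    using Suc by (simp add: mult.assoc)
  also have "\<dots> = z * oprod g (Suc m)"
    using Suc.prems[of "Suc m"] by (simp flip: mult.assoc)
  finally show ?case .
qed simp

lemma oprod_power_add:
  assumes "\<And>i j. i \<in> {1..m} \<Longrightarrow> j \<in> {1..m} \<Longrightarrow> y i * y j = y j * y i"
  shows "oprod (\<lambda>i. y i ^ a i) m * oprod (\<lambda>i. y i ^ b i) m = oprod (\<lambda>i. y i ^ (a i + b i)) m"
  using assms
proof (induction m)
  case (Suc m)
  let ?A = "oprod (\<lambda>i. y i ^ a i) m" and ?B = "oprod (\<lambda>i. y i ^ b i) m"
  have "?A * y (Suc m) ^ b (Suc m) = y (Suc m) ^ b (Suc m) * ?A"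
  proof (rule oprod_commute)
    fix i assume "i \<in> {1..m}"
    then have "y i * y (Suc m) = y (Suc m) * y i"
      using Suc.prems[of i "Suc m"] by simp
    then show "y i ^ a i * y (Suc m) ^ b (Suc m) = y (Suc m) ^ b (Suc m) * y i ^ a i"
      by (metis power_commuting_commutes)
  qed
  then have "oprod (\<lambda>i. y i ^ a i) (Suc m) * oprod (\<lambda>i. y i ^ b i) (Suc m)
      = y (Suc m) ^ a (Suc m) * y (Suc m) ^ b (Suc m) * (?A * ?B)"
    by (simp add: mult.assoc flip: mult.assoc[of ?A])
  then show ?case
    using Suc by (simp add: power_add)
qed simp

lemma mpow_zero [simp]: "mpow a n (\<lambda>_. 0) = 1"
  unfolding mpow_def by (induction n) auto

lemma mpow_add:
  assumes "\<And>i j. i \<in> {1..n} \<Longrightarrow> j \<in> {1..n} \<Longrightarrow> a i * a j = a j * a i"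
  shows "mpow a n I * mpow a n J = mpow a n (\<lambda>i. I i + J i)"
  unfolding mpow_def using assms by (rule oprod_power_add)

lemma mpow_incI_top:
  assumes "i \<in> {1..n}" and "\<And>l. i < l \<Longrightarrow> l \<le> n \<Longrightarrow> J l = 0"
  shows "mpow a n (incI J i) = a i * mpow a n J"
  using assms unfolding mpow_def
proof (induction n)
  case (Suc n)
  show ?case
  proof (cases "i = Suc n")
    case True
    then have "oprod (\<lambda>l. a l ^ incI J i l) n = oprod (\<lambda>l. a l ^ J l) n"
      by (intro oprod_cong) (auto simp: incI_def)
    then show ?thesis
      using True by (simp add: incI_def mult.assoc)
  next
    case False
    then show ?thesis
      using Suc by (simp add: incI_def)
  qed
qed simp

definition decI :: "(nat \<Rightarrow> nat) \<Rightarrow> nat \<Rightarrow> (nat \<Rightarrow> nat)" where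
  "decI J m = J(m := J m - 1)"

abbreviation idx_le :: "nat \<Rightarrow> int \<Rightarrow> (nat \<Rightarrow> nat) set" where
  "idx_le n q \<equiv> {I \<in> idx n. int (absI n I) \<le> q}"

lemma idx_outside: "J \<in> idx n \<Longrightarrow> i \<notin> {1..n} \<Longrightarrow> J i = 0"
  by (cases "i = 0") (auto simp: idx_def)

lemma incI_idx: "J \<in> idx n \<Longrightarrow> i \<in> {1..n} \<Longrightarrow> incI J i \<in> idx n"
  by (auto simp: idx_def incI_def)

lemma decI_idx: "J \<in> idx n \<Longrightarrow> decI J i \<in> idx n"
  by (auto simp: idx_def decI_def)

lemma incI_decI: "0 < J m \<Longrightarrow> incI (decI J m) m = J"
  by (auto simp: incI_def decI_def)

lemma decI_incI [simp]: "decI (incI J m) m = J"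
  by (auto simp: incI_def decI_def)

lemma incI_commute: "incI (incI J i) m = incI (incI J m) i"
  by (auto simp: incI_def)

lemma incI_decI_commute: "0 < J i \<Longrightarrow> incI (decI J i) m = decI (incI J m) i"
  by (auto simp: incI_def decI_def)

lemma absI_incI:
  assumes "i \<in> {1..n}"
  shows "absI n (incI J i) = absI n J + 1"
proof -
  have "absI n (incI J i) = (\<Sum>l=1..n. J l + (if l = i then 1 else 0))"
    unfolding absI_def incI_def by (intro sum.cong) auto
  then show ?thesis
    using assms by (simp add: sum.distrib absI_def)
qed

lemma absI_decI: "0 < J m \<Longrightarrow> m \<in> {1..n} \<Longrightarrow> absI n (decI J m) + 1 = absI n J"
  using absI_incI[of m n "decI J m"] by (simp add: incI_decI)

lemma idx_deg_incI: "J \<in> idx_deg n (p - 1) \<Longrightarrow> i \<in> {1..n} \<Longrightarrow> incI J i \<in> idx_deg n p"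
  by (auto simp: idx_deg_def incI_idx absI_incI)

lemma idx_cases [consumes 1, case_names zero top]:
  assumes J: "J \<in> idx n"
  obtains "J = (\<lambda>_. 0)"
    | m J' where "m \<in> {1..n}" "J' \<in> idx n" "J = incI J' m" "\<And>l. m < l \<Longrightarrow> J' l = 0"
proof (cases "\<exists>i\<in>{1..n}. 0 < J i")
  case False
  have "J l = 0" for l
    using False J idx_outside by (cases "l \<in> {1..n}") auto
  then show ?thesis
    using that(1) by blast
next
  case True
  define m where "m = Max {i\<in>{1..n}. 0 < J i}"
  have "m \<in> {i\<in>{1..n}. 0 < J i}"
    unfolding m_def using True by (intro Max_in) auto
  then have m: "m \<in> {1..n}" "0 < J m"
    by auto
  have above_m: "J l = 0" if "m < l" for l
  proof (cases "l \<le> n")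
    case True
    then show ?thesis
      using \<open>m < l\<close> m Max_ge[of "{i\<in>{1..n}. 0 < J i}" l] by (fastforce simp: m_def)
  qed (use J idx_outside in auto)
  show ?thesis
  proof (rule that(2))
    show "m \<in> {1..n}"
      by (fact m(1))
    show "decI J m \<in> idx n"
      using J by (rule decI_idx)
    show "J = incI (decI J m) m"
      using m(2) by (simp add: incI_decI)
    show "decI J m l = 0" if "m < l" for l
      using above_m that by (simp add: decI_def)
  qed
qed

lemma idx_cases_above [consumes 1, case_names vanish top]:
  assumes "J \<in> idx n"
  obtains "\<And>l. i < l \<Longrightarrow> J l = 0"
    | m J' where "m \<in> {1..n}" "i < m" "J' \<in> idx n" "J = incI J' m" "\<And>l. m < l \<Longrightarrow> J' l = 0"
  using assms
proof (cases rule: idx_cases)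
  case (top m J')
  then show ?thesis
    using that by (cases "i < m") (auto simp: incI_def)
qed (use that in simp)

lemma finite_idx_le: "finite (idx_le n q)"
proof (rule finite_subset)
  show "idx_le n q \<subseteq> {I. \<forall>i. (i \<in> {1..n} \<longrightarrow> I i \<in> {0..nat q}) \<and> (i \<notin> {1..n} \<longrightarrow> I i = 0)}"
  proof safe
    fix I i assume I: "I \<in> idx n" "int (absI n I) \<le> q"
    show "I i \<in> {0..nat q}" if "i \<in> {1..n}"
    proof -
      have "I i \<le> absI n I"
        unfolding absI_def using that by (intro member_le_sum) auto
      then show ?thesis
        using I(2) by auto
    qed
    show "I i = 0" if "i \<notin> {1..n}"
      using I that by (simp add: idx_outside)
  qed
qed (intro finite_set_of_finite_funs; simp)

lemma finite_idx_deg: "finite (idx_deg n p)"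
  by (rule finite_subset[OF _ finite_idx_le[of n p]]) (auto simp: idx_deg_def)

lemma sum_idx_deg_decI:
  assumes "m \<in> {1..n}"
  shows "(\<Sum>I\<in>idx_deg n p. f I * (of_nat (I m) * C * mpow a n (decI I m)))
       = (\<Sum>J\<in>idx_deg n (p - 1). of_nat (J m + 1) * f (incI J m) * C * mpow a n J)"
proof -
  let ?A = "{I \<in> idx_deg n p. 0 < I m}"
  have "(\<Sum>I\<in>idx_deg n p. f I * (of_nat (I m) * C * mpow a n (decI I m)))
      = (\<Sum>I\<in>?A. f I * (of_nat (I m) * C * mpow a n (decI I m)))"
    by (rule sum.mono_neutral_right[OF finite_idx_deg]) auto
  also have "\<dots> = (\<Sum>J\<in>idx_deg n (p - 1). of_nat (J m + 1) * f (incI J m) * C * mpow a n J)"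
  proof (rule sum.reindex_bij_witness[where i = "\<lambda>J. incI J m" and j = "\<lambda>I. decI I m"])
    fix I assume I: "I \<in> ?A"
    then show "incI (decI I m) m = I"
      by (simp add: incI_decI)
    have "absI n (decI I m) + 1 = absI n I"
      using I assms by (intro absI_decI) auto
    then show "decI I m \<in> idx_deg n (p - 1)"
      using I by (auto simp: idx_deg_def decI_idx)
    have "of_nat (decI I m m + 1) = (of_nat (I m) :: 'a)"
      using I by (simp add: decI_def)
    then show "of_nat (decI I m m + 1) * f (incI (decI I m) m) * C * mpow a n (decI I m)
        = f I * (of_nat (I m) * C * mpow a n (decI I m))"
      using I by (simp add: incI_decI mult_of_nat_commute mult.assoc)
  next
    fix J assume "J \<in> idx_deg n (p - 1)"
    then have "incI J m \<in> idx_deg n p"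
      using assms by (rule idx_deg_incI)
    then show "incI J m \<in> ?A"
      by (simp add: incI_def)
  qed simp
  finally show ?thesis .
qed

lemma comm_mult_left: "comm (a * b) c = a * comm b c + comm a c * b"
  by (simp add: comm_def algebra_simps)

lemma additive_comm_left: "additive (\<lambda>u. comm u (c::'a::ring_1))"
  by (rule additive.intro) (simp add: comm_def algebra_simps)

lemma additive_mult_left: "additive (\<lambda>u. (a::'a::ring) * u)"
  by (rule additive.intro) (simp add: distrib_left)

locale lie_rinehart_generators =
  fixes S :: "'u::ring_1 set" and \<alpha> :: "nat \<Rightarrow> 'u" and n :: nat
  assumes one_in_S: "1 \<in> S"
    and diff_in_S: "s \<in> S \<Longrightarrow> t \<in> S \<Longrightarrow> s - t \<in> S"
    and mult_in_S: "s \<in> S \<Longrightarrow> t \<in> S \<Longrightarrow> s * t \<in> S"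
    and S_commute: "s \<in> S \<Longrightarrow> t \<in> S \<Longrightarrow> s * t = t * s"
    and anchor_in_S: "i \<in> {1..n} \<Longrightarrow> s \<in> S \<Longrightarrow> comm (\<alpha> i) s \<in> S"
    and bracket_in_span:
      "i \<in> {1..n} \<Longrightarrow> j \<in> {1..n} \<Longrightarrow>
         \<exists>c. (\<forall>l. c l \<in> S) \<and> comm (\<alpha> i) (\<alpha> j) = (\<Sum>l=1..n. c l * \<alpha> l)"
begin

lemma zero_in_S: "0 \<in> S"
  using diff_in_S[OF one_in_S one_in_S] by simp

lemma uminus_in_S: "s \<in> S \<Longrightarrow> - s \<in> S"
  using diff_in_S[OF zero_in_S] by fastforce

lemma add_in_S: "s \<in> S \<Longrightarrow> t \<in> S \<Longrightarrow> s + t \<in> S"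
  using diff_in_S[of s "- t"] by (simp add: uminus_in_S)

lemma of_nat_in_S: "of_nat k \<in> S"
  by (induction k) (simp_all add: zero_in_S one_in_S add_in_S)

lemma comm_mult_left_S: "g \<in> S \<Longrightarrow> s \<in> S \<Longrightarrow> comm (g * w) s = g * comm w s"
  by (simp add: comm_def algebra_simps S_commute mult.assoc flip: mult.assoc[of s g w])

abbreviation F :: "int \<Rightarrow> 'u set" where
  "F q \<equiv> Fil S \<alpha> n q"

lemma Fil_zero: "0 \<in> F q"
  unfolding Fil_def using zero_in_S by (intro CollectI exI[of _ "\<lambda>_. 0"]) simp

lemma Fil_add:
  assumes "u \<in> F q" "v \<in> F q"
  shows "u + v \<in> F q"
proof -
  obtain f where "\<And>I. f I \<in> S" "u = (\<Sum>I\<in>idx_le n q. f I * mpow \<alpha> n I)"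
    using assms(1) unfolding Fil_def by blast
  moreover obtain g where "\<And>I. g I \<in> S" "v = (\<Sum>I\<in>idx_le n q. g I * mpow \<alpha> n I)"
    using assms(2) unfolding Fil_def by blast
  ultimately show ?thesis
    unfolding Fil_def
    by (intro CollectI exI[of _ "\<lambda>I. f I + g I"]) (simp add: add_in_S distrib_right sum.distrib)
qed

lemma Fil_sum: "(\<And>a. a \<in> A \<Longrightarrow> g a \<in> F q) \<Longrightarrow> sum g A \<in> F q"
  by (induction A rule: infinite_finite_induct) (simp_all add: Fil_zero Fil_add)

lemma Fil_monomial:
  assumes "s \<in> S" "I \<in> idx_le n q"
  shows "s * mpow \<alpha> n I \<in> F q"
proof -
  have "(\<Sum>J\<in>idx_le n q. (if J = I then s else 0) * mpow \<alpha> n J)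
      = (\<Sum>J\<in>idx_le n q. if J = I then s * mpow \<alpha> n J else 0)"
    by (rule sum.cong) auto
  also have "\<dots> = s * mpow \<alpha> n I"
    using assms(2) finite_idx_le[of n q] by simp
  finally show ?thesis
    unfolding Fil_def using assms(1) zero_in_S
    by (intro CollectI exI[of _ "\<lambda>J. if J = I then s else 0"]) auto
qed

lemma mpow_in_Fil: "I \<in> idx_le n q \<Longrightarrow> mpow \<alpha> n I \<in> F q"
  using Fil_monomial[OF one_in_S] by simp

lemma Fil_additive_image:
  assumes "u \<in> F q" "additive \<phi>"
    and "\<And>s I. s \<in> S \<Longrightarrow> I \<in> idx_le n q \<Longrightarrow> \<phi> (s * mpow \<alpha> n I) \<in> F r"
  shows "\<phi> u \<in> F r"
proof -
  obtain f where "\<And>I. f I \<in> S" "u = (\<Sum>I\<in>idx_le n q. f I * mpow \<alpha> n I)"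
    using assms(1) unfolding Fil_def by blast
  then show ?thesis
    using assms(3) by (auto simp: additive.sum[OF assms(2)] intro!: Fil_sum)
qed

lemma Fil_mono:
  assumes "u \<in> F q" "q \<le> r"
  shows "u \<in> F r"
proof -
  have "(\<lambda>u. u) u \<in> F r"
    by (rule Fil_additive_image[OF assms(1)])
      (use assms(2) in \<open>auto intro: additive.intro Fil_monomial\<close>)
  then show ?thesis
    by simp
qed

lemma Fil_uminus:
  assumes "u \<in> F q"
  shows "- u \<in> F q"
proof (rule Fil_additive_image[OF assms])
  show "additive uminus"
    by (rule additive.intro) simp
next
  fix s I assume "s \<in> S" "I \<in> idx_le n q"
  then show "- (s * mpow \<alpha> n I) \<in> F q"
    using Fil_monomial[of "- s" I q] by (simp add: uminus_in_S)
qed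

lemma Fil_diff: "u \<in> F q \<Longrightarrow> v \<in> F q \<Longrightarrow> u - v \<in> F q"
  using Fil_add[of u q "- v"] by (simp add: Fil_uminus)

lemma Fil_mult_S: "s \<in> S \<Longrightarrow> u \<in> F q \<Longrightarrow> s * u \<in> F q"
  using Fil_additive_image[where \<phi> = "\<lambda>u. s * u", OF _ additive_mult_left[of s]]
  by (simp add: Fil_monomial mult_in_S flip: mult.assoc)

lemma alpha_mult_Fil_of_monomials:
  assumes step: "\<And>I. I \<in> idx_le n q \<Longrightarrow> \<alpha> i * mpow \<alpha> n I \<in> F (int (absI n I) + 1)"
    and "v \<in> F q" "i \<in> {1..n}"
  shows "\<alpha> i * v \<in> F (q + 1)"
proof (rule Fil_additive_image[OF assms(2) additive_mult_left])
  fix s I assume s: "s \<in> S" and I: "I \<in> idx_le n q"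
  have "\<alpha> i * (s * mpow \<alpha> n I) = s * (\<alpha> i * mpow \<alpha> n I) + comm (\<alpha> i) s * mpow \<alpha> n I"
    by (simp add: comm_def algebra_simps)
  moreover have "s * (\<alpha> i * mpow \<alpha> n I) \<in> F (q + 1)"
    using I by (intro Fil_mult_S s Fil_mono[OF step]) auto
  moreover have "comm (\<alpha> i) s * mpow \<alpha> n I \<in> F (q + 1)"
    using I by (intro Fil_monomial anchor_in_S assms(3) s) auto
  ultimately show "\<alpha> i * (s * mpow \<alpha> n I) \<in> F (q + 1)"
    by (simp add: Fil_add)
qed

lemma alpha_mult_mpow_in_Fil_of_diff:
  assumes "\<alpha> i * mpow \<alpha> n J - mpow \<alpha> n (incI J i) \<in> F (int (absI n J))" "J \<in> idx n" "i \<in> {1..n}"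
  shows "\<alpha> i * mpow \<alpha> n J \<in> F (int (absI n J) + 1)"
proof -
  have "(\<alpha> i * mpow \<alpha> n J - mpow \<alpha> n (incI J i)) + mpow \<alpha> n (incI J i) \<in> F (int (absI n J) + 1)"
    using assms by (intro Fil_add Fil_mono[OF assms(1)] mpow_in_Fil) (auto simp: incI_idx absI_incI)
  then show ?thesis
    by simp
qed

text \<open>Moving \<open>\<alpha> i\<close> past the top factor \<open>\<alpha> m\<close> of \<open>\<alpha>\<^sup>J\<close> costs \<open>[\<alpha> m, \<alpha> i] \<in> L\<close>,
  which has lower degree.\<close>
lemma alpha_mult_mpow:
  assumes "J \<in> idx n" "i \<in> {1..n}"
  shows "\<alpha> i * mpow \<alpha> n J - mpow \<alpha> n (incI J i) \<in> F (int (absI n J))"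
  using assms
proof (induction "absI n J" arbitrary: J i rule: less_induct)
  case less
  have IH: "\<alpha> i' * mpow \<alpha> n J' \<in> F (int (absI n J') + 1)"
    if "J' \<in> idx n" "absI n J' < absI n J" "i' \<in> {1..n}" for J' i'
    using that by (intro alpha_mult_mpow_in_Fil_of_diff less.hyps)
  from less.prems(1) show ?case
  proof (cases rule: idx_cases_above[where i = i])
    case vanish
    then have "mpow \<alpha> n (incI J i) = \<alpha> i * mpow \<alpha> n J"
      using less.prems by (intro mpow_incI_top) auto
    then show ?thesis
      by (simp add: Fil_zero)
  next
    case (top m J')
    have deg: "absI n J = absI n J' + 1"
      using top by (simp add: absI_incI)
    have mpow_J: "mpow \<alpha> n J = \<alpha> m * mpow \<alpha> n J'"
      using mpow_incI_top[of m n J' \<alpha>] top by simp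
    have mpow_incI_J: "mpow \<alpha> n (incI J i) = \<alpha> m * mpow \<alpha> n (incI J' i)"
      using mpow_incI_top[of m n "incI J' i" \<alpha>] top
      by (simp add: incI_commute[of J' i m]) (auto simp: incI_def)
    define r where "r = \<alpha> i * mpow \<alpha> n J' - mpow \<alpha> n (incI J' i)"
    have r: "r \<in> F (int (absI n J'))"
      unfolding r_def using top(3) deg less.prems(2) by (intro less.hyps) auto
    obtain c where c: "\<And>l. c l \<in> S" "comm (\<alpha> m) (\<alpha> i) = (\<Sum>l=1..n. c l * \<alpha> l)"
      using bracket_in_span[OF top(1) less.prems(2)] by blast
    have "\<alpha> i * mpow \<alpha> n J - mpow \<alpha> n (incI J i) = \<alpha> m * r - comm (\<alpha> m) (\<alpha> i) * mpow \<alpha> n J'"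
      by (simp add: mpow_J mpow_incI_J r_def comm_def algebra_simps)
    also have "\<dots> = \<alpha> m * r - (\<Sum>l=1..n. c l * (\<alpha> l * mpow \<alpha> n J'))"
      by (simp add: c(2) sum_distrib_right mult.assoc)
    also have "\<dots> \<in> F (int (absI n J') + 1)"
    proof (rule Fil_diff)
      show "\<alpha> m * r \<in> F (int (absI n J') + 1)"
        using r top(1) deg by (intro alpha_mult_Fil_of_monomials[OF IH]) auto
      show "(\<Sum>l=1..n. c l * (\<alpha> l * mpow \<alpha> n J')) \<in> F (int (absI n J') + 1)"
      proof (rule Fil_sum)
        fix l assume "l \<in> {1..n}"
        then show "c l * (\<alpha> l * mpow \<alpha> n J') \<in> F (int (absI n J') + 1)"
          using top(3) deg by (intro Fil_mult_S c(1) IH) simp_all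
      qed
    qed
    finally show ?thesis
      using deg by (simp add: add.commute)
  qed
qed

lemma alpha_mult_Fil:
  assumes "v \<in> F q" "i \<in> {1..n}"
  shows "\<alpha> i * v \<in> F (q + 1)"
proof (rule alpha_mult_Fil_of_monomials[OF _ assms])
  fix I assume "I \<in> idx_le n q"
  then have "I \<in> idx n"
    by simp
  with assms(2) show "\<alpha> i * mpow \<alpha> n I \<in> F (int (absI n I) + 1)"
    by (intro alpha_mult_mpow_in_Fil_of_diff alpha_mult_mpow)
qed

text \<open>The derivation \<open>\<alpha> m \<mapsto> c m\<close> of the polynomial ring in the \<open>\<alpha> m\<close>, applied to \<open>\<alpha>\<^sup>I\<close>;
  for \<open>c m = [\<alpha> m, s]\<close> it is the leading part of \<open>[\<alpha>\<^sup>I, s]\<close>. The junk value \<open>decI I m = I\<close>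
  for \<open>I m = 0\<close> is harmless, as that summand has the factor \<open>0\<close>.\<close>
definition mpow_deriv :: "(nat \<Rightarrow> 'u) \<Rightarrow> (nat \<Rightarrow> nat) \<Rightarrow> 'u" where
  "mpow_deriv c I = (\<Sum>m=1..n. of_nat (I m) * c m * mpow \<alpha> n (decI I m))"

lemma mpow_deriv_zero [simp]: "mpow_deriv c (\<lambda>_. 0) = 0"
  by (simp add: mpow_deriv_def)

lemma mpow_deriv_in_Fil:
  assumes "\<And>m. m \<in> {1..n} \<Longrightarrow> c m \<in> S" "I \<in> idx n" "int (absI n I) - 1 \<le> q"
  shows "mpow_deriv c I \<in> F q"
  unfolding mpow_deriv_def
proof (rule Fil_sum)
  fix m assume m: "m \<in> {1..n}"
  show "of_nat (I m) * c m * mpow \<alpha> n (decI I m) \<in> F q"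
  proof (cases "I m = 0")
    case False
    then have "decI I m \<in> idx_le n q"
      using absI_decI[of I m n] m assms(2,3) by (auto simp: decI_idx)
    then show ?thesis
      using assms(1) m by (intro Fil_monomial mult_in_S of_nat_in_S) auto
  qed (simp add: Fil_zero)
qed

lemma mpow_deriv_incI_top:
  assumes "m \<in> {1..n}" "\<And>l. m < l \<Longrightarrow> I l = 0"
  shows "\<alpha> m * mpow_deriv c I + c m * mpow \<alpha> n I
       = mpow_deriv c (incI I m) + mpow_deriv (\<lambda>l. comm (\<alpha> m) (c l)) I"
proof -
  have summand: "\<alpha> m * (of_nat (I l) * c l * mpow \<alpha> n (decI I l))
      = of_nat (I l) * c l * mpow \<alpha> n (decI (incI I m) l)
        + of_nat (I l) * comm (\<alpha> m) (c l) * mpow \<alpha> n (decI I l)" for l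
  proof (cases "I l = 0")
    case False
    have "mpow \<alpha> n (incI (decI I l) m) = \<alpha> m * mpow \<alpha> n (decI I l)"
      using assms by (intro mpow_incI_top) (auto simp: decI_def)
    then have "\<alpha> m * mpow \<alpha> n (decI I l) = mpow \<alpha> n (decI (incI I m) l)"
      using False by (simp add: incI_decI_commute)
    moreover have "\<alpha> m * (of_nat (I l) * c l * mpow \<alpha> n (decI I l))
        = of_nat (I l) * ((\<alpha> m * c l) * mpow \<alpha> n (decI I l))"
      by (metis mult.assoc mult_of_nat_commute)
    moreover have "\<alpha> m * c l = c l * \<alpha> m + comm (\<alpha> m) (c l)"
      by (simp add: comm_def)
    ultimately show ?thesis
      by (simp add: distrib_left distrib_right mult.assoc)
  qed simp
  have "mpow_deriv c (incI I m)
      = (\<Sum>l=1..n. of_nat (I l) * c l * mpow \<alpha> n (decI (incI I m) l)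
                  + (if l = m then c l * mpow \<alpha> n (decI (incI I m) l) else 0))"
    unfolding mpow_deriv_def by (intro sum.cong) (auto simp: incI_def distrib_right)
  also have "\<dots> = (\<Sum>l=1..n. of_nat (I l) * c l * mpow \<alpha> n (decI (incI I m) l)) + c m * mpow \<alpha> n I"
    using assms(1) by (simp add: sum.distrib)
  finally show ?thesis
    unfolding mpow_deriv_def by (simp add: sum_distrib_left summand sum.distrib)
qed

lemma comm_mpow:
  assumes "I \<in> idx n" "s \<in> S"
  shows "comm (mpow \<alpha> n I) s - mpow_deriv (\<lambda>m. comm (\<alpha> m) s) I \<in> F (int (absI n I) - 2)"
  using assms(1)
proof (induction "absI n I" arbitrary: I rule: less_induct)
  case less
  let ?c = "\<lambda>m. comm (\<alpha> m) s"
  from less.prems show ?case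
  proof (cases rule: idx_cases)
    case zero
    then show ?thesis
      by (simp add: comm_def Fil_zero)
  next
    case (top m I')
    have deg: "absI n I = absI n I' + 1"
      using top by (simp add: absI_incI)
    define r where "r = comm (mpow \<alpha> n I') s - mpow_deriv ?c I'"
    have r: "r \<in> F (int (absI n I') - 2)"
      unfolding r_def using top(2) deg by (intro less.hyps) auto
    have "comm (mpow \<alpha> n I) s = \<alpha> m * comm (mpow \<alpha> n I') s + ?c m * mpow \<alpha> n I'"
      using mpow_incI_top[of m n I' \<alpha>] top by (simp add: comm_mult_left)
    also have "\<dots> = \<alpha> m * r + (\<alpha> m * mpow_deriv ?c I' + ?c m * mpow \<alpha> n I')"
      by (simp add: r_def algebra_simps)
    also have "\<dots> = \<alpha> m * r + mpow_deriv ?c I + mpow_deriv (\<lambda>l. comm (\<alpha> m) (?c l)) I'"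
      using mpow_deriv_incI_top[OF top(1,4), where c = ?c] top(3) by (simp add: add.assoc)
    finally have "comm (mpow \<alpha> n I) s - mpow_deriv ?c I
        = \<alpha> m * r + mpow_deriv (\<lambda>l. comm (\<alpha> m) (?c l)) I'"
      by simp
    also have "\<dots> \<in> F (int (absI n I) - 2)"
    proof (rule Fil_add)
      show "\<alpha> m * r \<in> F (int (absI n I) - 2)"
        using alpha_mult_Fil[OF r top(1)] deg by simp
      show "mpow_deriv (\<lambda>l. comm (\<alpha> m) (?c l)) I' \<in> F (int (absI n I) - 2)"
        using top(1,2) deg assms(2) by (intro mpow_deriv_in_Fil anchor_in_S) auto
    qed
    finally show ?thesis .
  qed
qed

lemma comm_Fil:
  assumes "v \<in> F q" "s \<in> S"
  shows "comm v s \<in> F (q - 1)"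
proof (rule Fil_additive_image[OF assms(1) additive_comm_left])
  fix t I assume t: "t \<in> S" and I: "I \<in> idx_le n q"
  let ?D = "mpow_deriv (\<lambda>m. comm (\<alpha> m) s) I"
  have "(comm (mpow \<alpha> n I) s - ?D) + ?D \<in> F (q - 1)"
  proof (rule Fil_add)
    show "comm (mpow \<alpha> n I) s - ?D \<in> F (q - 1)"
      using I by (intro Fil_mono[OF comm_mpow] assms(2)) auto
    show "?D \<in> F (q - 1)"
      using I by (intro mpow_deriv_in_Fil anchor_in_S assms(2)) auto
  qed
  then show "comm (t * mpow \<alpha> n I) s \<in> F (q - 1)"
    using t assms(2) by (simp add: comm_mult_left_S Fil_mult_S)
qed

lemma comm_Omega0:
  assumes "\<And>i. i \<in> {1..n} \<Longrightarrow> g i \<in> S" "s \<in> S"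
  shows "comm (Omega0 \<alpha> n g) s = (\<Sum>i=1..n. g i * comm (\<alpha> i) s)"
  unfolding Omega0_def additive.sum[OF additive_comm_left] using assms
  by (intro sum.cong) (simp_all add: comm_mult_left_S)

lemma sum_mpow_deriv_reindex:
  "(\<Sum>I\<in>idx_deg n p. f I * mpow_deriv c I)
     = (\<Sum>J\<in>idx_deg n (p - 1). (\<Sum>i=1..n. of_nat (J i + 1) * f (incI J i) * c i) * mpow \<alpha> n J)"
proof -
  have "(\<Sum>I\<in>idx_deg n p. f I * mpow_deriv c I)
      = (\<Sum>i=1..n. \<Sum>I\<in>idx_deg n p. f I * (of_nat (I i) * c i * mpow \<alpha> n (decI I i)))"
    unfolding mpow_deriv_def by (simp add: sum_distrib_left sum.swap[of _ "idx_deg n p"])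
  also have "\<dots> = (\<Sum>i=1..n. \<Sum>J\<in>idx_deg n (p - 1). of_nat (J i + 1) * f (incI J i) * c i * mpow \<alpha> n J)"
    by (intro sum.cong refl sum_idx_deg_decI)
  also have "\<dots> = (\<Sum>J\<in>idx_deg n (p - 1). \<Sum>i=1..n. of_nat (J i + 1) * f (incI J i) * c i * mpow \<alpha> n J)"
    by (rule sum.swap)
  also have "\<dots> = (\<Sum>J\<in>idx_deg n (p - 1). (\<Sum>i=1..n. of_nat (J i + 1) * f (incI J i) * c i) * mpow \<alpha> n J)"
    by (simp add: sum_distrib_right)
  finally show ?thesis .
qed

lemma comm_leading_term:
  assumes f: "\<forall>I\<in>idx_deg n p. f I \<in> S"
    and u: "u - (\<Sum>I\<in>idx_deg n p. f I * mpow \<alpha> n I) \<in> F (p - 1)"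
    and s: "s \<in> S"
  shows "comm u s - (\<Sum>J\<in>idx_deg n (p - 1).
            comm (Omega0 \<alpha> n (\<lambda>i. of_nat (J i + 1) * f (incI J i))) s * mpow \<alpha> n J) \<in> F (p - 2)"
proof -
  let ?V = "\<Sum>I\<in>idx_deg n p. f I * mpow \<alpha> n I"
  let ?D = "mpow_deriv (\<lambda>m. comm (\<alpha> m) s)"
  have lead: "(\<Sum>J\<in>idx_deg n (p - 1).
            comm (Omega0 \<alpha> n (\<lambda>i. of_nat (J i + 1) * f (incI J i))) s * mpow \<alpha> n J)
      = (\<Sum>I\<in>idx_deg n p. f I * ?D I)"
    unfolding sum_mpow_deriv_reindex
  proof (intro sum.cong refl)
    fix J assume J: "J \<in> idx_deg n (p - 1)"
    have coeff: "\<And>i. i \<in> {1..n} \<Longrightarrow> of_nat (J i + 1) * f (incI J i) \<in> S"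
      using f J by (intro mult_in_S of_nat_in_S) (simp add: idx_deg_incI)
    show "comm (Omega0 \<alpha> n (\<lambda>i. of_nat (J i + 1) * f (incI J i))) s * mpow \<alpha> n J
        = (\<Sum>i=1..n. of_nat (J i + 1) * f (incI J i) * comm (\<alpha> i) s) * mpow \<alpha> n J"
      by (simp only: comm_Omega0[OF coeff s])
  qed
  have "comm ?V s = (\<Sum>I\<in>idx_deg n p. f I * comm (mpow \<alpha> n I) s)"
    unfolding additive.sum[OF additive_comm_left] using f s by (intro sum.cong) (simp_all add: comm_mult_left_S)
  then have split: "comm u s - (\<Sum>I\<in>idx_deg n p. f I * ?D I)
      = comm (u - ?V) s + (\<Sum>I\<in>idx_deg n p. f I * (comm (mpow \<alpha> n I) s - ?D I))"
    by (simp add: additive.diff[OF additive_comm_left] right_diff_distrib sum_subtractf)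
  have "comm (u - ?V) s + (\<Sum>I\<in>idx_deg n p. f I * (comm (mpow \<alpha> n I) s - ?D I)) \<in> F (p - 2)"
  proof (rule Fil_add)
    show "comm (u - ?V) s \<in> F (p - 2)"
      using comm_Fil[OF u s] by simp
    show "(\<Sum>I\<in>idx_deg n p. f I * (comm (mpow \<alpha> n I) s - ?D I)) \<in> F (p - 2)"
      using f s by (intro Fil_sum Fil_mult_S) (auto simp: idx_deg_def dest: comm_mpow)
  qed
  then show ?thesis
    unfolding lead split .
qed

lemma d0_leading_term:
  assumes "\<forall>k\<in>{1..n}. x k \<in> S" "\<forall>I\<in>idx_deg n p. f I \<in> S"
    and "u - (\<Sum>I\<in>idx_deg n p. f I * mpow \<alpha> n I) \<in> F (p - 1)"
  shows "(\<lambda>k. d0 x u k - (\<Sum>J\<in>idx_deg n (p - 1).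
      d0 x (Omega0 \<alpha> n (\<lambda>i. of_nat (J i + 1) * f (incI J i))) k * mpow \<alpha> n J)) \<in> FX1 S \<alpha> n (p - 2)"
  unfolding FX1_def d0_def mem_Collect_eq using assms by (intro ballI comm_leading_term) auto

lemma d1_leading_term:
  assumes x: "\<forall>k\<in>{1..n}. x k \<in> S" and f: "\<forall>I\<in>idx_deg n p. \<forall>l\<in>{1..n}. f I l \<in> S"
    and \<omega>: "(\<lambda>l. \<omega> l - (\<Sum>I\<in>idx_deg n p. f I l * mpow \<alpha> n I)) \<in> FX1 S \<alpha> n (p - 1)"
  shows "(\<lambda>k l. d1 x \<omega> k l - (\<Sum>J\<in>idx_deg n (p - 1).
      d1 x (Omega1 \<alpha> n (\<lambda>i m. of_nat (J i + 1) * f (incI J i) m)) k l * mpow \<alpha> n J)) \<in> FX2 S \<alpha> n (p - 2)"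
proof -
  let ?lead = "\<lambda>k l. comm (\<omega> k) (x l) - (\<Sum>J\<in>idx_deg n (p - 1).
    comm (Omega0 \<alpha> n (\<lambda>i. of_nat (J i + 1) * f (incI J i) k)) (x l) * mpow \<alpha> n J)"
  have lead: "?lead k l \<in> F (p - 2)" if "k \<in> {1..n}" "l \<in> {1..n}" for k l
    using x f \<omega> that unfolding FX1_def by (intro comm_leading_term[where f = "\<lambda>I. f I k"]) auto
  have "d1 x \<omega> k l - (\<Sum>J\<in>idx_deg n (p - 1).
      d1 x (Omega1 \<alpha> n (\<lambda>i m. of_nat (J i + 1) * f (incI J i) m)) k l * mpow \<alpha> n J)
    = ?lead k l - ?lead l k" for k l
    unfolding d1_def Omega1_def Omega0_def by (simp add: left_diff_distrib sum_subtractf)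
  then show ?thesis
    unfolding FX2_def using lead by (simp add: Fil_diff)
qed

end

definition span_over :: "'a::ring_1 set \<Rightarrow> ('b \<Rightarrow> 'a) \<Rightarrow> 'b set \<Rightarrow> 'a set" where
  "span_over K g D = {\<Sum>a\<in>A. c a * g a | A c. finite A \<and> A \<subseteq> D \<and> (\<forall>a\<in>A. c a \<in> K)}"

locale central_subring =
  fixes K :: "'a::ring_1 set"
  assumes zero_in_K: "0 \<in> K"
    and add_in_K: "a \<in> K \<Longrightarrow> b \<in> K \<Longrightarrow> a + b \<in> K"
    and mult_in_K: "a \<in> K \<Longrightarrow> b \<in> K \<Longrightarrow> a * b \<in> K"
    and uminus_in_K: "a \<in> K \<Longrightarrow> - a \<in> K"
    and K_central: "a \<in> K \<Longrightarrow> a * u = u * a"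
begin

lemma span_over_single: "k \<in> K \<Longrightarrow> a \<in> D \<Longrightarrow> k * g a \<in> span_over K g D"
  unfolding span_over_def by (rule CollectI, rule exI[of _ "{a}"], rule exI[of _ "\<lambda>_. k"]) simp

lemma span_over_zero: "0 \<in> span_over K g D"
  unfolding span_over_def by (rule CollectI, rule exI[of _ "{}"]) simp

lemma span_over_add:
  assumes "u \<in> span_over K g D" "v \<in> span_over K g D"
  shows "u + v \<in> span_over K g D"
proof -
  obtain A c where A: "u = (\<Sum>a\<in>A. c a * g a)" "finite A" "A \<subseteq> D" "\<forall>a\<in>A. c a \<in> K"
    using assms(1) unfolding span_over_def by blast
  obtain B d where B: "v = (\<Sum>a\<in>B. d a * g a)" "finite B" "B \<subseteq> D" "\<forall>a\<in>B. d a \<in> K"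
    using assms(2) unfolding span_over_def by blast
  have restrict: "(\<Sum>a\<in>A \<union> B. (if a \<in> X then h a else 0) * g a) = (\<Sum>a\<in>X. h a * g a)"
    if "X \<subseteq> A \<union> B" for X h
  proof -
    have "(\<Sum>a\<in>A \<union> B. (if a \<in> X then h a else 0) * g a) = (\<Sum>a\<in>A \<union> B. if a \<in> X then h a * g a else 0)"
      by (rule sum.cong) auto
    also have "\<dots> = (\<Sum>a\<in>(A \<union> B) \<inter> X. h a * g a)"
      using A(2) B(2) by (simp add: sum.inter_restrict)
    also have "(A \<union> B) \<inter> X = X"
      using that by blast
    finally show ?thesis .
  qed
  let ?e = "\<lambda>a. (if a \<in> A then c a else 0) + (if a \<in> B then d a else 0)"
  have "u + v = (\<Sum>a\<in>A \<union> B. ?e a * g a)"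
    using A(1) B(1) restrict[of A c] restrict[of B d] by (simp add: distrib_right sum.distrib)
  moreover have "?e a \<in> K" for a
    using A(4) B(4) by (simp add: add_in_K zero_in_K)
  ultimately show ?thesis
    unfolding span_over_def using A(2,3) B(2,3)
    by (intro CollectI exI[of _ "A \<union> B"] exI[of _ ?e]) simp
qed

lemma span_over_uminus:
  assumes "u \<in> span_over K g D"
  shows "- u \<in> span_over K g D"
proof -
  obtain A c where A: "u = (\<Sum>a\<in>A. c a * g a)" "finite A" "A \<subseteq> D" "\<forall>a\<in>A. c a \<in> K"
    using assms unfolding span_over_def by blast
  then have "- u = (\<Sum>a\<in>A. (- c a) * g a)"
    by (simp add: sum_negf)
  then show ?thesis
    unfolding span_over_def using A(2-4)
    by (intro CollectI exI[of _ A] exI[of _ "\<lambda>a. - c a"]) (simp add: uminus_in_K)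
qed

lemma span_over_sum: "(\<And>a. a \<in> A \<Longrightarrow> h a \<in> span_over K g D) \<Longrightarrow> sum h A \<in> span_over K g D"
  by (induction A rule: infinite_finite_induct) (simp_all add: span_over_zero span_over_add)

lemma span_over_mult:
  assumes g_mult: "\<And>a b. a \<in> D \<Longrightarrow> b \<in> D \<Longrightarrow> \<exists>e\<in>D. g a * g b = g e"
    and "u \<in> span_over K g D" "v \<in> span_over K g D"
  shows "u * v \<in> span_over K g D"
proof -
  obtain A c where A: "u = (\<Sum>a\<in>A. c a * g a)" "A \<subseteq> D" "\<forall>a\<in>A. c a \<in> K"
    using assms(2) unfolding span_over_def by blast
  obtain B d where B: "v = (\<Sum>b\<in>B. d b * g b)" "B \<subseteq> D" "\<forall>b\<in>B. d b \<in> K"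
    using assms(3) unfolding span_over_def by blast
  have "c a * g a * (d b * g b) \<in> span_over K g D" if ab: "a \<in> A" "b \<in> B" for a b
  proof -
    obtain e where "e \<in> D" "g a * g b = g e"
      using g_mult ab A(2) B(2) by blast
    moreover have "g a * d b = d b * g a"
      using K_central[of "d b" "g a"] B(3) ab by simp
    then have "c a * g a * (d b * g b) = (c a * d b) * (g a * g b)"
      by (metis mult.assoc)
    ultimately show ?thesis
      using A(3) B(3) ab by (simp add: span_over_single mult_in_K)
  qed
  then show ?thesis
    unfolding A(1) B(1) sum_product by (intro span_over_sum) blast
qed

end

lemma lie_rinehart_generators_if_LR_env:
  assumes env: "LR_env K S x \<alpha> n"
  shows "lie_rinehart_generators S \<alpha> n"
proof -
  have K: "0 \<in> K \<and> 1 \<in> K \<and> (\<forall>a\<in>K. \<forall>b\<in>K. a + b \<in> K \<and> a * b \<in> K \<and> - a \<in> K) \<and>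
      (\<forall>c\<in>K. \<forall>u. c * u = u * c)"
    using env unfolding LR_env_def by (elim conjE) (intro conjI; assumption)
  have S: "(\<forall>i\<in>{1..n}. x i \<in> S) \<and> (\<forall>s\<in>S. \<forall>t\<in>S. s * t = t * s) \<and>
      S = span_over K (mpow x n) (idx n)"
    using env unfolding LR_env_def span_over_def by (elim conjE) (intro conjI; assumption)
  have LR: "(\<forall>i\<in>{1..n}. \<forall>s\<in>S. comm (\<alpha> i) s \<in> S) \<and>
      (\<forall>i\<in>{1..n}. \<forall>j\<in>{1..n}. \<exists>c. (\<forall>l. c l \<in> S) \<and> comm (\<alpha> i) (\<alpha> j) = (\<Sum>l=1..n. c l * \<alpha> l))"
    using env unfolding LR_env_def by (elim conjE) (intro conjI; assumption)
  interpret central_subring K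
    using K by unfold_locales blast+
  have S_eq: "S = span_over K (mpow x n) (idx n)"
    using S by blast
  have mpow_x_mult: "\<exists>e\<in>idx n. mpow x n a * mpow x n b = mpow x n e"
    if "a \<in> idx n" "b \<in> idx n" for a b
  proof
    show "(\<lambda>i. a i + b i) \<in> idx n"
      using that by (simp add: idx_def)
    show "mpow x n a * mpow x n b = mpow x n (\<lambda>i. a i + b i)"
      using S by (intro mpow_add) auto
  qed
  show ?thesis
  proof unfold_locales
    have "1 * mpow x n (\<lambda>_. 0) \<in> span_over K (mpow x n) (idx n)"
      using K by (intro span_over_single) (auto simp: idx_def)
    then show "1 \<in> S"
      by (simp add: S_eq)
    show "s - t \<in> S" if "s \<in> S" "t \<in> S" for s t
      using that span_over_add[of s _ _ "- t"] span_over_uminus[of t] by (simp add: S_eq) blast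
    show "s * t \<in> S" if "s \<in> S" "t \<in> S" for s t
      using that mpow_x_mult by (simp add: S_eq span_over_mult)
  qed (use S LR in auto)
qed

theorem proposition2p4:
  fixes K S :: "'u::ring_1 set" and x \<alpha> :: "nat \<Rightarrow> 'u" and n :: nat and p :: int
  assumes "1 \<le> n" and "LR_env K S x \<alpha> n" and "0 \<le> p"
  shows "(\<forall>u f. u \<in> Fil S \<alpha> n p \<and> (\<forall>I\<in>idx_deg n p. f I \<in> S) \<and>
            u - (\<Sum>I\<in>idx_deg n p. f I * mpow \<alpha> n I) \<in> Fil S \<alpha> n (p - 1)
          \<longrightarrow> (\<lambda>k. d0 x u k -
                 (\<Sum>J\<in>idx_deg n (p - 1).
                    d0 x (Omega0 \<alpha> n (\<lambda>i. of_nat (J i + 1) * f (incI J i))) k * mpow \<alpha> n J))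
              \<in> FX1 S \<alpha> n (p - 2))
       \<and> (\<forall>\<omega> f. \<omega> \<in> FX1 S \<alpha> n p \<and> (\<forall>I\<in>idx_deg n p. \<forall>l\<in>{1..n}. f I l \<in> S) \<and>
            (\<lambda>l. \<omega> l - (\<Sum>I\<in>idx_deg n p. f I l * mpow \<alpha> n I)) \<in> FX1 S \<alpha> n (p - 1)
          \<longrightarrow> (\<lambda>k l. d1 x \<omega> k l -
                 (\<Sum>J\<in>idx_deg n (p - 1).
                    d1 x (Omega1 \<alpha> n (\<lambda>i m. of_nat (J i + 1) * f (incI J i) m)) k l * mpow \<alpha> n J))
              \<in> FX2 S \<alpha> n (p - 2))"
proof -
  interpret lie_rinehart_generators S \<alpha> n
    using assms(2) by (rule lie_rinehart_generators_if_LR_env)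
  have "\<forall>k\<in>{1..n}. x k \<in> S"
    using assms(2) unfolding LR_env_def by (elim conjE) assumption
  then show ?thesis
    using d0_leading_term d1_leading_term by blast
qed

end
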